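(* In the cylindrical dual-RSK algorithm (with fixed $N\ge1$, $L$, $L-N\ge1$), let $w_1<w_2$ be entries of $\{1,\dots,N\}$ that are column-inserted successively (first $w_1$, then $w_2$) into a cylindrical infinite Young tableau during the same time step. Then it cannot happen that the insertion of $w_1$ is interior while the insertion of $w_2$ is cylindrical. In other words, among the insertions performed at a given time step, all the cylindrical insertions happen before the interior insertions.
   Context: Fix integers $N\ge1$, $L$ with $L-N\ge1$. Innovation data is a two-row array $\binom{a_1\,a_2\,\cdots}{b_1\,b_2\,\cdots}$ with $a_i\in\mathbb{N}$ nondecreasing, $b_i\in\{1,\dots,N\}$, and $b_i\le b_{i+1}$ whenever $a_i=a_{i+1}$. A cylindrical infinite Young tableau consists of a main tableau $\mathcal{P}_0$ (a filling of a Young diagram by positive integers, rows weakly increasing to the right, columns strictly increasing downward; columns have at most $N$ boxes, although entries of $\mathcal{P}_0$ may pass below row $N$ after an overflow) together with copies $\mathcal{P}_m$, $m\in\mathbb{Z}$: $\mathcal{P}_m$ is obtained from $\mathcal{P}_0$ by adding $mN$ to every entry and translating it $m(L-N)$ columns to the left and $mN$ rows down. If $\lambda=(\lambda_1\ge\dots\ge\lambda_N)$ are the row lengths of $\mathcal{P}_0$, there is an overflow of the first $k$ rows when $\lambda_1=\dots=\lambda_k=L-N+\lambda_N$. Cylindrical dual-RSK: starting from the empty tableau, at time $n$ the entries $b_i$ with $a_i=n$ are inserted in the order of the array. To insert $b$: in the current column of $\mathcal{P}_0$ (starting with the first), if every entry is strictly smaller than $b$, $b$ is appended at the end of the column; otherwise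 $b$ replaces the uppermost entry $w\ge b$ of the column and $w$ is inserted in the same way into the next column; this is done simultaneously in each copy $\mathcal{P}_m$ with the entry $b+mN$. When the first $k$ rows overflow and $1\le b\le k$, the insertion displaces a box of $\mathcal{P}_0$ into the period $\mathcal{P}_{-1}$, which may in turn displace a box into $\mathcal{P}_{-2}$, and so on (at most $N$ times); afterwards all copies are updated to agree with the new $\mathcal{P}_0$. A tableau $\mathcal{Q}$ records in each newly created box the time of its creation and a tableau $\mathcal{W}$ records the winding of the insertion path that created it (the number of times the insertion path crossed between periods). The insertion path of an insertion is the set of coordinates of boxes changed by it. An insertion path is interior if it did not move past the first row (did not cross between periods), and cylindrical otherwise. *)

theory Defs
  imports Main
begin

text \<open>
  Global (unfolded) model of a cylindrical infinite Young tableau.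
  A state is a filling  T :: int \<Rightarrow> int \<Rightarrow> int option  of the plane
  (row index r, growing downward; column index c, growing to the right);
  T r c = None means that the box (r,c) is empty.  The main tableau P_0 lives
  in rows 1..N starting at column 1; the copy P_m is P_0 shifted by
  m*N rows down and m*(L-N) columns to the left, with entries increased by m*N.
  Hence the state is always kept periodic:
     T (r + m*N) (c - m*(L-N)) = map_option (\<lambda>v. v + m*N) (T r c).
\<close>

type_synonym cyl_tab = "int \<Rightarrow> int \<Rightarrow> int option"

definition cyl_empty :: cyl_tab where
  "cyl_empty = (\<lambda>r c. None)"

text \<open>Top boundary of global column c: the first row of the uppermost copy P_m
  whose (empty) diagram contains column c, i.e. the least m with
  c \<ge> 1 - m*(L-N); the top row is m*N + 1.\<close>
definition cyl_top :: "int \<Rightarrow> int \<Rightarrow> int \<Rightarrow> int" where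
  "cyl_top N L c = 1 - N * ((c - 1) div (L - N))"

definition cyl_upd :: "int \<Rightarrow> int \<Rightarrow> cyl_tab \<Rightarrow> int \<Rightarrow> int \<Rightarrow> int \<Rightarrow> cyl_tab" where
  "cyl_upd N L T r c w =
     (\<lambda>r' c'. if (\<exists>m::int. r' = r + m * N \<and> c' = c - m * (L - N))
              then Some (w + ((r' - r) div N) * N) else T r' c')"

definition cyl_has_ge :: "int \<Rightarrow> int \<Rightarrow> cyl_tab \<Rightarrow> int \<Rightarrow> int \<Rightarrow> bool" where
  "cyl_has_ge N L T c w = (\<exists>k::nat. \<exists>v. T (cyl_top N L c + int k) c = Some v \<and> w \<le> v)"

definition cyl_bump_row :: "int \<Rightarrow> int \<Rightarrow> cyl_tab \<Rightarrow> int \<Rightarrow> int \<Rightarrow> int" where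
  "cyl_bump_row N L T c w =
     cyl_top N L c + int (LEAST k::nat. \<exists>v. T (cyl_top N L c + int k) c = Some v \<and> w \<le> v)"

definition cyl_end_row :: "int \<Rightarrow> int \<Rightarrow> cyl_tab \<Rightarrow> int \<Rightarrow> int" where
  "cyl_end_row N L T c = cyl_top N L c + int (LEAST k::nat. T (cyl_top N L c + int k) c = None)"

text \<open>Column insertion of w into column c of the cylindrical tableau T.
  cyl_col_ins N L T w c T' p : the result is T' and p is the insertion path,
  the list of coordinates (row, column) of the boxes changed (in the copy
  where the insertion started; all periodic copies are changed simultaneously).\<close>
inductive cyl_col_ins ::
  "int \<Rightarrow> int \<Rightarrow> cyl_tab \<Rightarrow> int \<Rightarrow> int \<Rightarrow> cyl_tab \<Rightarrow> (int \<times> int) list \<Rightarrow> bool"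
  for N L :: int where
  append: "\<not> cyl_has_ge N L T c w \<Longrightarrow> r = cyl_end_row N L T c \<Longrightarrow>
           cyl_col_ins N L T w c (cyl_upd N L T r c w) [(r, c)]"
| bump: "cyl_has_ge N L T c w \<Longrightarrow> r = cyl_bump_row N L T c w \<Longrightarrow> T r c = Some v \<Longrightarrow>
         cyl_col_ins N L (cyl_upd N L T r c w) v (c + 1) T' p \<Longrightarrow>
         cyl_col_ins N L T w c T' ((r, c) # p)"

definition cyl_insert :: "int \<Rightarrow> int \<Rightarrow> cyl_tab \<Rightarrow> int \<Rightarrow> cyl_tab \<Rightarrow> (int \<times> int) list \<Rightarrow> bool" where
  "cyl_insert N L T b T' p = cyl_col_ins N L T b 1 T' p"

inductive cyl_run :: "int \<Rightarrow> int \<Rightarrow> cyl_tab \<Rightarrow> int list \<Rightarrow> cyl_tab \<Rightarrow> bool"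
  for N L :: int where
  Nil: "cyl_run N L T [] T"
| Cons: "cyl_insert N L T b T' p \<Longrightarrow> cyl_run N L T' bs T'' \<Longrightarrow> cyl_run N L T (b # bs) T''"

text \<open>Interior insertion path: it never moved past the first row (row 1) of P_0,
  i.e. never crossed into the period P_{-1}.  Cylindrical otherwise.\<close>
definition interior_path :: "(int \<times> int) list \<Rightarrow> bool" where
  "interior_path p = (\<forall>(r, c) \<in> set p. 1 \<le> r)"

definition cylindrical_path :: "(int \<times> int) list \<Rightarrow> bool" where
  "cylindrical_path p = (\<not> interior_path p)"

text \<open>Innovation data: a list of columns (a_i, b_i) of the two-row array.\<close>
definition innovation_data :: "int \<Rightarrow> (nat \<times> int) list \<Rightarrow> bool" where
  "innovation_data N d =
     (sorted (map fst d) \<and> (\<forall>x \<in> set d. 1 \<le> snd x \<and> snd x \<le> N) \<and>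
      (\<forall>i. Suc i < length d \<longrightarrow> fst (d ! i) = fst (d ! Suc i) \<longrightarrow> snd (d ! i) \<le> snd (d ! Suc i)))"

end

theory Submission
  imports Defs
begin

text \<open>
  Column insertion into a periodic tableau changes, besides the boxes on its path, only their
  periodic copies, and a copy landing to the right of the current column carries a value smaller
  than the one being inserted there. Hence all searches of an insertion can be made in the
  tableau as it was before the insertion, so an insertion is a path of boxes read off the old
  tableau. From this description one checks that periodicity, contiguity and strict increase of
  the columns are preserved.

  Now insert \<open>w\<^sub>1 < w\<^sub>2\<close> in succession. In every column reached by the second insertion, the
  value it carries exceeds the value written there by the first insertion, so the second
  insertion bumps or appends strictly below the first one. Thus the second path runs strictly
  below the first in every column it visits, and if the first path stays in rows \<open>\<ge> 1\<close>, so does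
  the second.
\<close>

type_synonym box_entry = "int \<times> int \<times> int"

lemma not_less_Least_offset:
  fixes P :: "int \<Rightarrow> bool"
  assumes "t \<le> \<rho>" and "\<rho> < t + int (LEAST k. P (t + int k))"
  shows "\<not> P \<rho>"
proof -
  have "nat (\<rho> - t) < (LEAST k. P (t + int k))" using assms by linarith
  then have "\<not> P (t + int (nat (\<rho> - t)))" by (rule not_less_Least)
  with assms(1) show ?thesis by simp
qed

locale cylinder =
  fixes N L :: int
  assumes N_pos: "N \<ge> 1" and shift_pos: "L - N \<ge> 1"
begin

section \<open>Periodic fillings\<close>

lemma shift_sign:
  "0 < m * (L - N) \<longleftrightarrow> 0 < m" "m * (L - N) < 0 \<longleftrightarrow> m < 0" "m * (L - N) = 0 \<longleftrightarrow> m = 0"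
  "0 < m * N \<longleftrightarrow> 0 < m" "m * N < 0 \<longleftrightarrow> m < 0"
  using N_pos shift_pos by (auto simp: zero_less_mult_iff mult_less_0_iff)

lemma cyl_top_shift: "cyl_top N L (c - m * (L - N)) = cyl_top N L c + m * N"
proof -
  have "(c - 1 + (- m) * (L - N)) div (L - N) = - m + (c - 1) div (L - N)"
    using shift_pos by (intro div_mult_self1) simp
  then have "(c - m * (L - N) - 1) div (L - N) = (c - 1) div (L - N) - m"
    by (simp add: diff_right_commute)
  then show ?thesis unfolding cyl_top_def by (simp add: right_diff_distrib)
qed

definition periodic :: "cyl_tab \<Rightarrow> bool" where
  "periodic T \<longleftrightarrow>
     (\<forall>r c m. T (r + m * N) (c - m * (L - N)) = map_option (\<lambda>v. v + m * N) (T r c))"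

lemma periodicD:
  "periodic T \<Longrightarrow> T (r + m * N) (c - m * (L - N)) = map_option (\<lambda>v. v + m * N) (T r c)"
  unfolding periodic_def by blast

lemma periodic_unshift:
  assumes "periodic T" and "T \<rho> (c - m * (L - N)) = Some x"
  shows "T (\<rho> - m * N) c = Some (x - m * N)"
  using periodicD[OF assms(1), of "\<rho> - m * N" m c] assms(2) by (cases "T (\<rho> - m * N) c") auto

lemma cyl_upd_copy:
  assumes "\<rho> = r + m * N" and "c' = c - m * (L - N)"
  shows "cyl_upd N L T r c w \<rho> c' = Some (w + m * N)"
proof -
  have "(\<rho> - r) div N = m" using assms N_pos by simp
  with assms show ?thesis unfolding cyl_upd_def by auto
qed

lemma cyl_upd_other:
  "\<nexists>m. \<rho> = r + m * N \<and> c' = c - m * (L - N) \<Longrightarrow> cyl_upd N L T r c w \<rho> c' = T \<rho> c'"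
  unfolding cyl_upd_def by auto

lemma cyl_upd_not_None: "T \<rho> c' \<noteq> None \<Longrightarrow> cyl_upd N L T r c w \<rho> c' \<noteq> None"
  unfolding cyl_upd_def by auto

lemma periodic_cyl_upd:
  assumes "periodic T"
  shows "periodic (cyl_upd N L T r c w)"
  unfolding periodic_def
proof (intro allI)
  fix \<rho> c' t
  let ?copy = "\<lambda>a b. \<exists>m. a = r + m * N \<and> b = c - m * (L - N)"
  have copy_iff: "?copy (\<rho> + t * N) (c' - t * (L - N)) \<longleftrightarrow> ?copy \<rho> c'"
  proof
    assume "?copy (\<rho> + t * N) (c' - t * (L - N))"
    then obtain m where "\<rho> + t * N = r + m * N" "c' - t * (L - N) = c - m * (L - N)" by blast
    then have "\<rho> = r + (m - t) * N \<and> c' = c - (m - t) * (L - N)" by (simp add: algebra_simps)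
    then show "?copy \<rho> c'" by blast
  next
    assume "?copy \<rho> c'"
    then obtain m where "\<rho> = r + m * N" "c' = c - m * (L - N)" by blast
    then have "\<rho> + t * N = r + (m + t) * N \<and> c' - t * (L - N) = c - (m + t) * (L - N)"
      by (simp add: algebra_simps)
    then show "?copy (\<rho> + t * N) (c' - t * (L - N))" by blast
  qed
  show "cyl_upd N L T r c w (\<rho> + t * N) (c' - t * (L - N)) =
        map_option (\<lambda>v. v + t * N) (cyl_upd N L T r c w \<rho> c')"
  proof (cases "?copy \<rho> c'")
    case True
    then obtain m where m: "\<rho> = r + m * N" "c' = c - m * (L - N)" by blast
    then have "cyl_upd N L T r c w (\<rho> + t * N) (c' - t * (L - N)) = Some (w + (m + t) * N)"
      by (intro cyl_upd_copy) (simp_all add: algebra_simps)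
    with cyl_upd_copy[OF m] show ?thesis by (simp add: algebra_simps)
  next
    case False
    with copy_iff show ?thesis
      using periodicD[OF assms] cyl_upd_other[of "\<rho> + t * N"] cyl_upd_other[of \<rho>] by simp
  qed
qed

definition columns_contiguous :: "cyl_tab \<Rightarrow> bool" where
  "columns_contiguous T \<longleftrightarrow>
     (\<forall>c r r'. T r c \<noteq> None \<longrightarrow> cyl_top N L c \<le> r' \<longrightarrow> r' \<le> r \<longrightarrow> T r' c \<noteq> None)"

definition columns_strict :: "cyl_tab \<Rightarrow> bool" where
  "columns_strict T \<longleftrightarrow>
     (\<forall>c r r' x y. cyl_top N L c \<le> r \<longrightarrow> r < r' \<longrightarrow> T r c = Some x \<longrightarrow> T r' c = Some y \<longrightarrow> x < y)"

definition cyl_tableau :: "cyl_tab \<Rightarrow> bool" where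
  "cyl_tableau T \<longleftrightarrow> periodic T \<and> columns_contiguous T \<and> columns_strict T"

lemma cyl_tableau_empty: "cyl_tableau cyl_empty"
  unfolding cyl_tableau_def periodic_def columns_contiguous_def columns_strict_def cyl_empty_def
  by simp

lemma cyl_tableau_periodic: "cyl_tableau T \<Longrightarrow> periodic T"
  unfolding cyl_tableau_def by simp

lemma cyl_tableau_contiguous:
  "cyl_tableau T \<Longrightarrow> T r c \<noteq> None \<Longrightarrow> cyl_top N L c \<le> r' \<Longrightarrow> r' \<le> r \<Longrightarrow> T r' c \<noteq> None"
  unfolding cyl_tableau_def columns_contiguous_def by blast

lemma cyl_tableau_strict:
  "cyl_tableau T \<Longrightarrow> cyl_top N L c \<le> r \<Longrightarrow> r < r' \<Longrightarrow> T r c = Some x \<Longrightarrow> T r' c = Some y \<Longrightarrow> x < y"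
  unfolding cyl_tableau_def columns_strict_def by blast

lemma cyl_tableau_above_entry:
  assumes "cyl_tableau T" and "T r c = Some x" and "cyl_top N L c \<le> \<rho>" and "\<rho> \<le> r"
  obtains y where "T \<rho> c = Some y" and "y \<le> x"
proof -
  obtain y where y: "T \<rho> c = Some y"
    using cyl_tableau_contiguous[OF assms(1)] assms(2-4) by blast
  have "y \<le> x"
  proof (cases "\<rho> = r")
    case False
    with assms(4) have "\<rho> < r" by simp
    with cyl_tableau_strict[OF assms(1,3) _ y assms(2)] show ?thesis by simp
  qed (use y assms(2) in simp)
  with y show ?thesis by (rule that)
qed

section \<open>Insertion rows\<close>

lemma cyl_bump_row_ge_top: "cyl_top N L c \<le> cyl_bump_row N L T c w"
  unfolding cyl_bump_row_def by simp

lemma cyl_end_row_ge_top: "cyl_top N L c \<le> cyl_end_row N L T c"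
  unfolding cyl_end_row_def by simp

lemma cyl_bump_row_entry:
  assumes "cyl_has_ge N L T c w"
  obtains v where "T (cyl_bump_row N L T c w) c = Some v" and "w \<le> v"
proof -
  from assms have "\<exists>k v. T (cyl_top N L c + int k) c = Some v \<and> w \<le> v"
    unfolding cyl_has_ge_def by blast
  from LeastI_ex[OF this] show ?thesis
    using that unfolding cyl_bump_row_def by blast
qed

lemma above_cyl_bump_row:
  assumes "cyl_top N L c \<le> \<rho>" and "\<rho> < cyl_bump_row N L T c w" and "T \<rho> c = Some x"
  shows "x < w"
proof -
  have "\<not> (\<exists>v. T \<rho> c = Some v \<and> w \<le> v)"
    using not_less_Least_offset[of "cyl_top N L c" \<rho> "\<lambda>\<rho>. \<exists>v. T \<rho> c = Some v \<and> w \<le> v"]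
      assms(1,2) unfolding cyl_bump_row_def by simp
  with assms(3) show ?thesis by simp
qed

lemma not_cyl_has_ge:
  assumes "\<not> cyl_has_ge N L T c w" and "cyl_top N L c \<le> \<rho>" and "T \<rho> c = Some x"
  shows "x < w"
proof -
  have "T (cyl_top N L c + int (nat (\<rho> - cyl_top N L c))) c = Some x" using assms(2,3) by simp
  with assms(1) have "\<not> w \<le> x" unfolding cyl_has_ge_def by blast
  then show ?thesis by simp
qed

text \<open>Strictly increasing integer entries eventually exceed every bound.\<close>
lemma empty_box_exists:
  assumes "cyl_tableau T" and "\<not> cyl_has_ge N L T c w"
  shows "\<exists>k::nat. T (cyl_top N L c + int k) c = None"
proof (rule ccontr)
  assume "\<not> ?thesis"
  define x where "x k = the (T (cyl_top N L c + int k) c)" for k :: nat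
  from \<open>\<not> ?thesis\<close> have x: "T (cyl_top N L c + int k) c = Some (x k)" for k
    unfolding x_def by auto
  have "x 0 + int k \<le> x k" for k
  proof (induction k)
    case (Suc k)
    have "x k < x (Suc k)"
      using cyl_tableau_strict[OF assms(1) _ _ x[of k] x[of "Suc k"]] by simp
    with Suc show ?case by simp
  qed simp
  then have "x 0 + int (nat (w - x 0)) \<le> x (nat (w - x 0))" .
  then have "w \<le> x (nat (w - x 0))" by linarith
  with x assms(2) show False unfolding cyl_has_ge_def by blast
qed

lemma cyl_end_row_empty:
  assumes "cyl_tableau T" and "\<not> cyl_has_ge N L T c w"
  shows "T (cyl_end_row N L T c) c = None"
  using LeastI_ex[OF empty_box_exists[OF assms]] unfolding cyl_end_row_def by simp

lemma above_cyl_end_row: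
  "cyl_top N L c \<le> \<rho> \<Longrightarrow> \<rho> < cyl_end_row N L T c \<Longrightarrow> T \<rho> c \<noteq> None"
  using not_less_Least_offset[of "cyl_top N L c" \<rho> "\<lambda>\<rho>. T \<rho> c = None"]
  unfolding cyl_end_row_def by simp

text \<open>No hypothesis \<open>cyl_top N L c \<le> r\<close> is needed: both insertion rows lie at or below
  the top boundary.\<close>
lemma insertion_row_below_smaller:
  assumes "cyl_tableau T" and "T r c = Some x" and "x < w"
  shows below_smaller_cyl_bump_row: "cyl_has_ge N L T c w \<Longrightarrow> r < cyl_bump_row N L T c w"
    and below_smaller_cyl_end_row: "\<not> cyl_has_ge N L T c w \<Longrightarrow> r < cyl_end_row N L T c"
proof -
  show "r < cyl_bump_row N L T c w" if has_ge: "cyl_has_ge N L T c w"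
  proof (rule ccontr)
    assume "\<not> ?thesis"
    then have "cyl_bump_row N L T c w \<le> r" by simp
    then obtain y where "T (cyl_bump_row N L T c w) c = Some y" "y \<le> x"
      using cyl_tableau_above_entry[OF assms(1,2) cyl_bump_row_ge_top] by blast
    moreover obtain v where "T (cyl_bump_row N L T c w) c = Some v" "w \<le> v"
      using cyl_bump_row_entry[OF has_ge] .
    ultimately show False using assms(3) by simp
  qed
  show "r < cyl_end_row N L T c" if "\<not> cyl_has_ge N L T c w"
  proof (rule ccontr)
    assume "\<not> ?thesis"
    then have "cyl_end_row N L T c \<le> r" by simp
    then obtain y where "T (cyl_end_row N L T c) c = Some y"
      using cyl_tableau_above_entry[OF assms(1,2) cyl_end_row_ge_top] by blast
    with cyl_end_row_empty[OF assms(1) that] show False by simp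
  qed
qed

section \<open>Insertion paths read off the old tableau\<close>

text \<open>The path of the column insertion of \<open>w\<close> into column \<open>c\<close>, with every search performed
  in the fixed tableau \<open>S\<close>; its elements \<open>(r, c, u)\<close> record that \<open>u\<close> is written into box \<open>(r, c)\<close>.\<close>
inductive bump_path :: "cyl_tab \<Rightarrow> int \<Rightarrow> int \<Rightarrow> box_entry list \<Rightarrow> bool" for S where
  append: "\<not> cyl_has_ge N L S c w \<Longrightarrow> r = cyl_end_row N L S c \<Longrightarrow> bump_path S w c [(r, c, w)]"
| bump: "cyl_has_ge N L S c w \<Longrightarrow> r = cyl_bump_row N L S c w \<Longrightarrow> S r c = Some v \<Longrightarrow>
    bump_path S v (c + 1) q \<Longrightarrow> bump_path S w c ((r, c, w) # q)"

fun write_path :: "cyl_tab \<Rightarrow> box_entry list \<Rightarrow> cyl_tab" where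
  "write_path T [] = T"
| "write_path T ((r, c, w) # q) = write_path (cyl_upd N L T r c w) q"

lemma write_path_append: "write_path T (qa @ qb) = write_path (write_path T qa) qb"
  by (induction T qa rule: write_path.induct) auto

lemma write_path_not_None: "T \<rho> c \<noteq> None \<Longrightarrow> write_path T q \<rho> c \<noteq> None"
  by (induction T q rule: write_path.induct) (auto simp: cyl_upd_not_None)

lemma periodic_write_path: "periodic T \<Longrightarrow> periodic (write_path T q)"
  by (induction T q rule: write_path.induct) (auto simp: periodic_cyl_upd)

lemma write_path_cases:
  obtains (old) "write_path T q \<rho> c = T \<rho> c"
  | (copy) r j u m where "(r, j, u) \<in> set q" and "\<rho> = r + m * N" and "c = j - m * (L - N)"
      and "write_path T q \<rho> c = Some (u + m * N)"
proof (induction T q arbitrary: thesis rule: write_path.induct)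
  case (1 T)
  then show ?case by simp
next
  case (2 T r j u q)
  show ?case
  proof (rule "2.IH")
    assume unchanged: "write_path (cyl_upd N L T r j u) q \<rho> c = cyl_upd N L T r j u \<rho> c"
    show ?thesis
    proof (cases "\<exists>m. \<rho> = r + m * N \<and> c = j - m * (L - N)")
      case True
      then obtain m where "\<rho> = r + m * N" "c = j - m * (L - N)" by blast
      with unchanged cyl_upd_copy show ?thesis by (intro "2.prems"(2)) auto
    next
      case False
      with unchanged show ?thesis by (intro "2.prems"(1)) (simp add: cyl_upd_other)
    qed
  qed (use "2.prems"(2) in auto)
qed

definition agrees_from :: "cyl_tab \<Rightarrow> cyl_tab \<Rightarrow> int \<Rightarrow> int \<Rightarrow> bool" where
  "agrees_from T' T c w \<longleftrightarrow> (\<forall>c' \<rho>. c \<le> c' \<longrightarrow>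
     T' \<rho> c' = T \<rho> c' \<or> (\<exists>x y. T' \<rho> c' = Some x \<and> T \<rho> c' = Some y \<and> x < w \<and> y < w))"

lemma agrees_from_refl: "agrees_from T T c w"
  unfolding agrees_from_def by simp

lemma agrees_from_ge_entry:
  "agrees_from T' T c w \<Longrightarrow> (\<exists>v. T' \<rho> c = Some v \<and> w \<le> v) \<longleftrightarrow> (\<exists>v. T \<rho> c = Some v \<and> w \<le> v)"
  unfolding agrees_from_def by (metis linorder_not_le option.inject order_refl)

lemma agrees_from_None: "agrees_from T' T c w \<Longrightarrow> T' \<rho> c = None \<longleftrightarrow> T \<rho> c = None"
  unfolding agrees_from_def by (metis option.distinct(1) order_refl)

lemma agrees_from_has_ge: "agrees_from T' T c w \<Longrightarrow> cyl_has_ge N L T' c w = cyl_has_ge N L T c w"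
  unfolding cyl_has_ge_def by (simp add: agrees_from_ge_entry)

lemma agrees_from_bump_row:
  "agrees_from T' T c w \<Longrightarrow> cyl_bump_row N L T' c w = cyl_bump_row N L T c w"
  unfolding cyl_bump_row_def by (simp add: agrees_from_ge_entry)

lemma agrees_from_end_row: "agrees_from T' T c w \<Longrightarrow> cyl_end_row N L T' c = cyl_end_row N L T c"
  unfolding cyl_end_row_def by (simp add: agrees_from_None)

text \<open>Writing \<open>w\<close> into column \<open>c\<close> alters the columns to its right only in the copies
  \<open>P\<^sub>m\<close> with \<open>m < 0\<close>, which receive the values \<open>w + m N < w \<le> v\<close>.\<close>
lemma agrees_from_cyl_upd:
  assumes "periodic T'" and "agrees_from T' T c w" and "T' r c = Some v" and "w \<le> v"
  shows "agrees_from (cyl_upd N L T' r c w) T (c + 1) v"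
  unfolding agrees_from_def
proof (intro allI impI)
  fix c' \<rho> assume "c + 1 \<le> c'"
  with assms(2) have old: "T' \<rho> c' = T \<rho> c' \<or>
      (\<exists>x y. T' \<rho> c' = Some x \<and> T \<rho> c' = Some y \<and> x < w \<and> y < w)"
    unfolding agrees_from_def by auto
  show "cyl_upd N L T' r c w \<rho> c' = T \<rho> c' \<or>
        (\<exists>x y. cyl_upd N L T' r c w \<rho> c' = Some x \<and> T \<rho> c' = Some y \<and> x < v \<and> y < v)"
  proof (cases "\<exists>m. \<rho> = r + m * N \<and> c' = c - m * (L - N)")
    case True
    then obtain m where m: "\<rho> = r + m * N" "c' = c - m * (L - N)" by blast
    with \<open>c + 1 \<le> c'\<close> have "m * (L - N) < 0" by simp
    then have "m * N < 0" using shift_sign by simp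
    moreover have "T' \<rho> c' = Some (v + m * N)"
      using periodicD[OF assms(1), of r m c] assms(3) m by simp
    ultimately have "\<exists>y. T \<rho> c' = Some y \<and> y < v"
      using old assms(4) by fastforce
    then obtain y where "T \<rho> c' = Some y" "y < v" by blast
    with cyl_upd_copy[OF m] \<open>m * N < 0\<close> assms(4) show ?thesis by auto
  next
    case False
    with old assms(4) show ?thesis by (auto simp: cyl_upd_other)
  qed
qed

lemma cyl_col_ins_bump_path:
  assumes "cyl_col_ins N L T' w c T'' p" and "periodic T'" and "agrees_from T' T c w"
  shows "\<exists>q. bump_path T w c q \<and> p = map (\<lambda>(r, c, u). (r, c)) q \<and> T'' = write_path T' q"
  using assms
proof (induction rule: cyl_col_ins.induct)
  case (append T' c w r)
  then have "bump_path T w c [(r, c, w)]"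
    by (intro bump_path.append) (auto simp: agrees_from_has_ge agrees_from_end_row)
  then show ?case by auto
next
  case (bump T' c w r v T'' p)
  obtain v' where "T' r c = Some v'" "w \<le> v'"
    using cyl_bump_row_entry[OF bump(1)] bump(2) by blast
  with bump(3) have "w \<le> v" by simp
  with bump.prems have "periodic (cyl_upd N L T' r c w)" "agrees_from (cyl_upd N L T' r c w) T (c + 1) v"
    using periodic_cyl_upd agrees_from_cyl_upd bump(3) by auto
  with bump.IH obtain q where q: "bump_path T v (c + 1) q" "p = map (\<lambda>(r, c, u). (r, c)) q"
    "T'' = write_path (cyl_upd N L T' r c w) q" by blast
  have "T' r c = T r c \<or> (\<exists>x y. T' r c = Some x \<and> T r c = Some y \<and> x < w \<and> y < w)"
    using bump.prems(2) unfolding agrees_from_def by blast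
  with bump(3) \<open>w \<le> v\<close> have "T r c = Some v" by auto
  with bump q(1) have "bump_path T w c ((r, c, w) # q)"
    by (intro bump_path.bump) (auto simp: agrees_from_has_ge agrees_from_bump_row)
  with q show ?case by auto
qed

lemma cyl_insert_bump_path:
  assumes "cyl_tableau T" and "cyl_insert N L T b T' p"
  shows "\<exists>q. bump_path T b 1 q \<and> p = map (\<lambda>(r, c, u). (r, c)) q \<and> T' = write_path T q"
  using cyl_col_ins_bump_path[of T b 1 T' p T] assms agrees_from_refl cyl_tableau_periodic
  unfolding cyl_insert_def by blast

lemma bump_path_hd: "bump_path S w c q \<Longrightarrow> \<exists>r q'. q = (r, c, w) # q'"
  by (induction rule: bump_path.induct) auto

lemma bump_path_bounds: "bump_path S w c q \<Longrightarrow> (r, j, u) \<in> set q \<Longrightarrow> c \<le> j \<and> w \<le> u"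
proof (induction rule: bump_path.induct)
  case (bump c w r v q)
  obtain x where "S r c = Some x" "w \<le> x" using cyl_bump_row_entry[OF bump(1)] bump(2) by blast
  with bump show ?case by auto
qed simp

lemma bump_path_columns_sorted: "bump_path S w c q \<Longrightarrow> sorted_wrt (\<lambda>(_, j, _) (_, j', _). j < j') q"
proof (induction rule: bump_path.induct)
  case (bump c w r v q)
  with bump_path_bounds[OF bump(4)] show ?case by fastforce
qed simp

lemma bump_path_value_mono:
  "bump_path S w c q \<Longrightarrow> (r, j, u) \<in> set q \<Longrightarrow> (r', j', u') \<in> set q \<Longrightarrow> j \<le> j' \<Longrightarrow> u \<le> u'"
proof (induction rule: bump_path.induct)
  case (bump c w r v q)
  obtain x where "S r c = Some x" "w \<le> x" using cyl_bump_row_entry[OF bump(1)] bump(2) by blast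
  with bump bump_path_bounds[OF bump(4)] show ?case by fastforce
qed simp

lemma bump_path_column_unique:
  "bump_path S w c q \<Longrightarrow> (r, j, u) \<in> set q \<Longrightarrow> (r', j, u') \<in> set q \<Longrightarrow> r' = r \<and> u' = u"
proof (induction rule: bump_path.induct)
  case (bump c w r v q)
  with bump_path_bounds[OF bump(4)] show ?case by fastforce
qed simp

lemma bump_path_step:
  assumes "bump_path S w c q" and "q = qa @ (r, j, u) # qb"
  obtains (append) "qb = []" and "\<not> cyl_has_ge N L S j u" and "r = cyl_end_row N L S j"
  | (bump) v where "cyl_has_ge N L S j u" and "r = cyl_bump_row N L S j u" and "S r j = Some v"
      and "bump_path S v (j + 1) qb"
  using assms
proof (induction qa arbitrary: w c q)
  case Nil
  from Nil.prems(3) show ?case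
  proof cases
    case append
    with Nil.prems(1,4) show ?thesis by auto
  next
    case bump
    with Nil.prems(2,4) show ?thesis by auto
  qed
next
  case (Cons e qa)
  from Cons.prems(3) show ?case
  proof cases
    case append
    with Cons.prems(4) show ?thesis by simp
  next
    case (bump r' v q')
    with Cons.prems(4) have "q' = qa @ (r, j, u) # qb" by simp
    with bump Cons.IH Cons.prems(1,2) show ?thesis by blast
  qed
qed

lemma bump_path_row_ge_top:
  assumes "bump_path S w c q" and "(r, j, u) \<in> set q"
  shows "cyl_top N L j \<le> r"
proof -
  obtain qa qb where "q = qa @ (r, j, u) # qb" using split_list[OF assms(2)] by blast
  with assms(1) show ?thesis
    by (cases rule: bump_path_step) (simp_all add: cyl_end_row_ge_top cyl_bump_row_ge_top)
qed

section \<open>Insertion preserves tableaux\<close>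

context
  fixes T :: cyl_tab and w0 c0 :: int and q :: "box_entry list"
  assumes tableau: "cyl_tableau T" and path: "bump_path T w0 c0 q"
begin

lemma bump_path_bumped_before:
  assumes "(r, j, u) \<in> set q" and "(r', j', u') \<in> set q" and "j < j'"
  obtains v where "T r j = Some v" and "v \<le> u'"
proof -
  obtain qa qb where split: "q = qa @ (r, j, u) # qb" using split_list[OF assms(1)] by blast
  from path split show ?thesis
  proof (cases rule: bump_path_step)
    case append
    with assms(2,3) split have "(r', j', u') \<in> set qa" by auto
    with bump_path_columns_sorted[OF path] split append assms(3) show ?thesis
      by (auto simp: sorted_wrt_append)
  next
    case (bump v)
    then obtain r1 qb' where "qb = (r1, j + 1, v) # qb'" using bump_path_hd by blast
    with split have "(r1, j + 1, v) \<in> set q" by simp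
    with bump_path_value_mono[OF path _ assms(2)] assms(3) have "v \<le> u'" by simp
    with bump(3) show ?thesis by (rule that)
  qed
qed

lemma bump_path_next:
  assumes "(r, j, u) \<in> set q" and "T r j = Some v"
  obtains r1 where "(r1, j + 1, v) \<in> set q"
proof -
  obtain qa qb where split: "q = qa @ (r, j, u) # qb" using split_list[OF assms(1)] by blast
  from path split show ?thesis
  proof (cases rule: bump_path_step)
    case append
    with cyl_end_row_empty[OF tableau] assms(2) show ?thesis by simp
  next
    case (bump v')
    with assms(2) obtain r1 qb' where "qb = (r1, j + 1, v) # qb'" using bump_path_hd by fastforce
    with split have "(r1, j + 1, v) \<in> set q" by simp
    then show ?thesis by (rule that)
  qed
qed

lemma bump_path_above:
  assumes "(r, j, u) \<in> set q" and "cyl_top N L j \<le> \<rho>" and "\<rho> < r"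
  obtains x where "T \<rho> j = Some x" and "x < u"
proof -
  obtain qa qb where split: "q = qa @ (r, j, u) # qb" using split_list[OF assms(1)] by blast
  from path split show ?thesis
  proof (cases rule: bump_path_step)
    case append
    with above_cyl_end_row assms(2,3) obtain x where "T \<rho> j = Some x" by blast
    with not_cyl_has_ge append(2) assms(2) that show ?thesis by blast
  next
    case (bump v)
    with cyl_tableau_contiguous[OF tableau] assms(2,3) obtain x where "T \<rho> j = Some x"
      by (metis less_imp_le option.distinct(1) not_None_eq)
    with above_cyl_bump_row bump(2) assms(2,3) that show ?thesis by blast
  qed
qed

lemma bump_path_below:
  assumes "(r, j, u) \<in> set q" and "r < \<rho>" and "T \<rho> j = Some y"
  shows "u < y"
proof -
  obtain qa qb where split: "q = qa @ (r, j, u) # qb" using split_list[OF assms(1)] by blast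
  have top: "cyl_top N L j \<le> r" using bump_path_row_ge_top[OF path assms(1)] .
  from path split show ?thesis
  proof (cases rule: bump_path_step)
    case append
    with cyl_end_row_empty[OF tableau] have "T r j = None" by simp
    with cyl_tableau_contiguous[OF tableau, of \<rho> j r] top assms(2,3) show ?thesis by simp
  next
    case (bump v)
    with cyl_bump_row_entry have "u \<le> v" by fastforce
    with cyl_tableau_strict[OF tableau top assms(2) bump(3) assms(3)] show ?thesis by simp
  qed
qed

lemma bump_path_below_smaller:
  assumes "(r, j, u) \<in> set q" and "T R j = Some x" and "x < u"
  shows "R < r"
proof -
  obtain qa qb where split: "q = qa @ (r, j, u) # qb" using split_list[OF assms(1)] by blast
  from path split show ?thesis
  proof (cases rule: bump_path_step)
    case append
    with below_smaller_cyl_end_row[OF tableau assms(2,3)] show ?thesis by simp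
  next
    case bump
    with below_smaller_cyl_bump_row[OF tableau assms(2,3)] show ?thesis by simp
  qed
qed

text \<open>Box \<open>(r, j)\<close> held an entry \<open>v \<le> u'\<close>; its copy \<open>(r - m N, j')\<close> holds \<open>v - m N < u'\<close>,
  so the search for \<open>u'\<close> in column \<open>j'\<close> ends below that copy.\<close>
lemma bump_path_below_copy:
  assumes "(r, j, u) \<in> set q" and "(r', j', u') \<in> set q" and "j < j'"
    and "j = j' - m * (L - N)"
  shows "r < r' + m * N"
proof -
  obtain v where v: "T r j = Some v" "v \<le> u'" using bump_path_bumped_before[OF assms(1-3)] .
  from assms(3,4) have "0 < m * N" using shift_sign by simp
  moreover have "T (r - m * N) j' = Some (v - m * N)"
    using periodicD[OF cyl_tableau_periodic[OF tableau], of r "- m" j] v(1) assms(4) by simp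
  ultimately have "r - m * N < r'"
    using bump_path_below_smaller[OF assms(2)] v(2) by simp
  then show ?thesis by simp
qed

lemma bump_path_copies_increasing:
  assumes "(r, j, u) \<in> set q" and "(r', j', u') \<in> set q"
    and "j - m * (L - N) = j' - m' * (L - N)" and "r + m * N < r' + m' * N"
  shows "u + m * N < u' + m' * N"
proof -
  have shift: "(m' - m) * (L - N) = j' - j" using assms(3) by (simp add: algebra_simps)
  consider "j < j'" | "j = j'" | "j' < j" by linarith
  then show ?thesis
  proof cases
    case 1
    with shift have "0 < (m' - m) * (L - N)" by simp
    then have "0 < (m' - m) * N" unfolding shift_sign .
    with bump_path_value_mono[OF path assms(1,2)] 1 show ?thesis by (simp add: algebra_simps)
  next
    case 2
    with shift have "(m' - m) * (L - N) = 0" by simp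
    then have "m = m'" unfolding shift_sign by simp
    with 2 bump_path_column_unique[OF path assms(1)] assms(2,4) show ?thesis by simp
  next
    case 3
    with shift have "j' = j - (m - m') * (L - N)" by (simp add: algebra_simps)
    from bump_path_below_copy[OF assms(2,1) 3 this] have "r' < r + (m - m') * N" .
    with assms(4) show ?thesis by (simp add: algebra_simps)
  qed
qed

lemma columns_contiguous_write_path: "columns_contiguous (write_path T q)"
  unfolding columns_contiguous_def
proof (intro allI impI)
  fix c \<rho> \<rho>'
  assume filled: "write_path T q \<rho> c \<noteq> None" and top: "cyl_top N L c \<le> \<rho>'" and "\<rho>' \<le> \<rho>"
  show "write_path T q \<rho>' c \<noteq> None"
  proof (cases "\<rho>' = \<rho>")
    case False
    with \<open>\<rho>' \<le> \<rho>\<close> have "\<rho>' < \<rho>" by simp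
    show ?thesis
    proof (cases rule: write_path_cases[of T q \<rho> c])
      case old
      with filled have "T \<rho> c \<noteq> None" by simp
      with cyl_tableau_contiguous[OF tableau _ top] \<open>\<rho>' \<le> \<rho>\<close> write_path_not_None show ?thesis
        by blast
    next
      case (copy r j u m)
      with top \<open>\<rho>' < \<rho>\<close> cyl_top_shift have "cyl_top N L j \<le> \<rho>' - m * N" "\<rho>' - m * N < r" by simp_all
      with bump_path_above[OF copy(1)] obtain x where "T (\<rho>' - m * N) j = Some x" by blast
      with periodicD[OF cyl_tableau_periodic[OF tableau], of "\<rho>' - m * N" m j] copy(3)
      have "T \<rho>' c \<noteq> None" by simp
      with write_path_not_None show ?thesis by blast
    qed
  qed (use filled in simp)
qed

lemma columns_strict_write_path: "columns_strict (write_path T q)"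
  unfolding columns_strict_def
proof (intro allI impI)
  fix c \<rho> \<rho>' x y
  assume top: "cyl_top N L c \<le> \<rho>" and "\<rho> < \<rho>'"
    and x: "write_path T q \<rho> c = Some x" and y: "write_path T q \<rho>' c = Some y"
  have per: "periodic T" using cyl_tableau_periodic[OF tableau] .
  show "x < y"
  proof (cases rule: write_path_cases[of T q \<rho> c])
    case old
    show ?thesis
    proof (cases rule: write_path_cases[of T q \<rho>' c])
      case old': old
      with old x y cyl_tableau_strict[OF tableau top \<open>\<rho> < \<rho>'\<close>] show ?thesis by simp
    next
      case (copy r j u m)
      from old x copy(3) have "T (\<rho> - m * N) j = Some (x - m * N)"
        using periodic_unshift[OF per] by simp
      moreover have "cyl_top N L j \<le> \<rho> - m * N" "\<rho> - m * N < r"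
        using top \<open>\<rho> < \<rho>'\<close> copy(2,3) cyl_top_shift by simp_all
      ultimately have "x - m * N < u"
        using bump_path_above[OF copy(1)] by (metis option.inject)
      with copy(4) y show ?thesis by simp
    qed
  next
    case (copy r j u m)
    show ?thesis
    proof (cases rule: write_path_cases[of T q \<rho>' c])
      case old
      have "r < \<rho>' - m * N" using copy(2) \<open>\<rho> < \<rho>'\<close> by simp
      moreover from old y copy(3) have "T (\<rho>' - m * N) j = Some (y - m * N)"
        using periodic_unshift[OF per] by simp
      ultimately have "u < y - m * N" by (rule bump_path_below[OF copy(1)])
      with copy(4) x show ?thesis by simp
    next
      case copy': (copy r' j' u' m')
      have "j - m * (L - N) = j' - m' * (L - N)" using copy(3) copy'(3) by simp
      moreover have "r + m * N < r' + m' * N" using copy(2) copy'(2) \<open>\<rho> < \<rho>'\<close> by simp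
      ultimately have "u + m * N < u' + m' * N"
        by (rule bump_path_copies_increasing[OF copy(1) copy'(1)])
      with copy(4) copy'(4) x y show ?thesis by simp
    qed
  qed
qed

lemma cyl_tableau_write_path: "cyl_tableau (write_path T q)"
  unfolding cyl_tableau_def
  using periodic_write_path[OF cyl_tableau_periodic[OF tableau]]
    columns_contiguous_write_path columns_strict_write_path by blast

section \<open>Successive insertions\<close>

lemma write_path_at:
  assumes "(r, c, u) \<in> set q"
  shows "write_path T q r c = Some u"
proof -
  obtain qa qb where split: "q = qa @ (r, c, u) # qb" using split_list[OF assms] by blast
  let ?S = "cyl_upd N L (write_path T qa) r c u"
  have "write_path T q r c = write_path ?S qb r c" using split by (simp add: write_path_append)
  also have "\<dots> = ?S r c"
  proof (cases rule: write_path_cases[of ?S qb r c])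
    case (copy r' j' u' m)
    have "c < j'"
      using bump_path_columns_sorted[OF path] split copy(1) by (auto simp: sorted_wrt_append)
    moreover have "(r', j', u') \<in> set q" using split copy(1) by simp
    ultimately have "r < r' + m * N" using bump_path_below_copy[OF assms] copy(3) by blast
    with copy(2) show ?thesis by simp
  qed
  also have "?S r c = Some u" using cyl_upd_copy[of r r 0 c c] by simp
  finally show ?thesis .
qed

lemma write_path_below_path_box:
  assumes "(r, c, u) \<in> set q" and "r < s" and "write_path T q s c = Some x"
  obtains u1 where "T r c = Some u1" and "u1 < x"
proof -
  have top: "cyl_top N L c \<le> r" using bump_path_row_ge_top[OF path assms(1)] .
  show ?thesis
  proof (cases rule: write_path_cases[of T q s c])
    case old
    with assms(3) have "T s c = Some x" by simp
    moreover from this obtain u1 where "T r c = Some u1"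
      using cyl_tableau_contiguous[OF tableau, of s c r] top assms(2) by auto
    ultimately show ?thesis using cyl_tableau_strict[OF tableau top assms(2)] that by blast
  next
    case (copy r' j' u' m)
    have "u < x"
      using cyl_tableau_strict[OF cyl_tableau_write_path top assms(2) write_path_at[OF assms(1)] assms(3)] .
    consider "j' < c" | "j' = c" | "c < j'" by linarith
    then show ?thesis
    proof cases
      case 1
      with copy(3) have "m * (L - N) < 0" by simp
      then have "m * N < 0" unfolding shift_sign .
      with bump_path_value_mono[OF path copy(1) assms(1)] 1 copy(4) assms(3) \<open>u < x\<close>
      show ?thesis by simp
    next
      case 2
      with copy(3) have "m * (L - N) = 0" by simp
      then have "m = 0" unfolding shift_sign .
      with 2 bump_path_column_unique[OF path assms(1)] copy(1,2) assms(2) show ?thesis by simp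
    next
      case 3
      then obtain u1 where "T r c = Some u1" "u1 \<le> u'"
        using bump_path_bumped_before[OF assms(1) copy(1)] by blast
      moreover from 3 copy(3) have "0 < m * (L - N)" by simp
      then have "0 < m * N" unfolding shift_sign .
      ultimately show ?thesis using copy(4) assms(3) that by simp
    qed
  qed
qed

lemma bump_path_below_path:
  assumes "bump_path (write_path T q) v c q'" and "(r, c, u) \<in> set q" and "u < v"
  shows "\<forall>(s, c', _) \<in> set q'. \<exists>r' u'. (r', c', u') \<in> set q \<and> r' < s"
  using assms
proof (induction arbitrary: r u rule: bump_path.induct)
  case (append c v s)
  then have "r < s"
    using below_smaller_cyl_end_row[OF cyl_tableau_write_path write_path_at] by blast
  with append.prems(1) show ?case by auto
next
  case (bump c v s v' q'')
  have "r < s"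
    using below_smaller_cyl_bump_row[OF cyl_tableau_write_path write_path_at[OF bump.prems(1)]
        bump.prems(2) bump(1)] bump(2) by simp
  obtain u1 where u1: "T r c = Some u1" "u1 < v'"
    using write_path_below_path_box[OF bump.prems(1) \<open>r < s\<close> bump(3)] .
  obtain r1 where "(r1, c + 1, u1) \<in> set q" using bump_path_next[OF bump.prems(1) u1(1)] .
  with u1(2) bump.IH have "\<forall>(s, c', _) \<in> set q''. \<exists>r' u'. (r', c', u') \<in> set q \<and> r' < s"
    by blast
  with \<open>r < s\<close> bump.prems(1) show ?case by auto
qed

end

lemma cyl_run_cyl_tableau: "cyl_run N L T bs T' \<Longrightarrow> cyl_tableau T \<Longrightarrow> cyl_tableau T'"
proof (induction rule: cyl_run.induct)
  case (Cons T b T' p bs T'')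
  obtain q where "bump_path T b 1 q" "T' = write_path T q"
    using cyl_insert_bump_path[OF Cons.prems Cons.hyps(1)] by blast
  with Cons cyl_tableau_write_path show ?case by blast
qed

lemma interior_path_cyl_insert_larger:
  assumes "cyl_tableau T" and "cyl_insert N L T w1 T1 p1" and "cyl_insert N L T1 w2 T2 p2"
    and "w1 < w2" and "interior_path p1"
  shows "interior_path p2"
proof -
  obtain q1 where q1: "bump_path T w1 1 q1" "p1 = map (\<lambda>(r, c, u). (r, c)) q1" "T1 = write_path T q1"
    using cyl_insert_bump_path[OF assms(1,2)] by blast
  have "cyl_tableau T1" using cyl_tableau_write_path[OF assms(1) q1(1)] q1(3) by simp
  then obtain q2 where q2: "bump_path T1 w2 1 q2" "p2 = map (\<lambda>(r, c, u). (r, c)) q2"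
    using cyl_insert_bump_path[OF _ assms(3)] by blast
  obtain r0 q0 where "q1 = (r0, 1, w1) # q0" using bump_path_hd[OF q1(1)] by blast
  then have "(r0, 1, w1) \<in> set q1" by simp
  with q1(3) q2(1) assms(4)
  have "\<forall>(s, c, _) \<in> set q2. \<exists>r u. (r, c, u) \<in> set q1 \<and> r < s"
    using bump_path_below_path[OF assms(1) q1(1)] by blast
  moreover have "\<forall>(r, c, u) \<in> set q1. 1 \<le> r"
    using assms(5) q1(2) unfolding interior_path_def by force
  ultimately show ?thesis unfolding interior_path_def q2(2) by fastforce
qed

end

theorem lemma3p1:
  fixes N L :: int and d :: "(nat \<times> int) list" and i :: nat
    and T T1 T2 :: cyl_tab and p1 p2 :: "(int \<times> int) list"
  assumes "N \<ge> 1" and "L - N \<ge> 1"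
    and "innovation_data N d"
    and "Suc i < length d"
    and "fst (d ! i) = fst (d ! Suc i)"
    and "snd (d ! i) < snd (d ! Suc i)"
    and "cyl_run N L cyl_empty (map snd (take i d)) T"
    and "cyl_insert N L T (snd (d ! i)) T1 p1"
    and "cyl_insert N L T1 (snd (d ! Suc i)) T2 p2"
  shows "\<not> (interior_path p1 \<and> cylindrical_path p2)"
proof -
  interpret cylinder N L using assms(1,2) by unfold_locales
  have "cyl_tableau T" using cyl_run_cyl_tableau[OF assms(7) cyl_tableau_empty] .
  from interior_path_cyl_insert_larger[OF this assms(8,9,6)] show ?thesis
    unfolding cylindrical_path_def by blast
qed

end
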